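(* Let $\mathbf{M}=(M_1,\dots,M_n)$ be a POVM on $\mathbb{C}^d$ with all nonzero effects of rank one, which is an extreme point of the convex set of $n$-outcome POVMs on $\mathbb{C}^d$. Then there exist a POVM $\mathbf{M}'=(M'_1,\dots,M'_{n'})$ on $\mathbb{C}^d$ and a classical post-processing $\mathcal{Q}$ with $\mathbf{M}=\mathcal{Q}(\mathbf{M}')$ such that (i) $n'\le2d^2$, and (ii) for every $j\in[n']$, $M'_j=\alpha'_j\ket{\psi_j}\bra{\psi_j}$ with a unit vector $\ket{\psi_j}$ and $0\le\alpha'_j\le\frac1d$.
   Context: A POVM on $\mathbb{C}^d$ is a tuple of positive semidefinite operators summing to $\mathbb{I}_d$; convex combinations are taken effect-wise. A classical post-processing $\mathcal{Q}$ is given by numbers $q_{i|j}\ge0$ with $\sum_iq_{i|j}=1$, and $\mathcal{Q}(\mathbf{M}')$ has effects $\sum_jq_{i|j}M'_j$. *)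

theory Defs
  imports "HOL-Analysis.Analysis"
begin

text \<open>Operators on the Hilbert space C^d are matrices of type complex^'d^'d,
  where 'd is a finite index type with CARD('d) = d.\<close>

definition cinner_vec :: "complex^'d \<Rightarrow> complex^'d \<Rightarrow> complex" where
  "cinner_vec x y = (\<Sum>i\<in>UNIV. cnj (x $ i) * y $ i)"

definition adjoint_mat :: "complex^'d^'d \<Rightarrow> complex^'d^'d" where
  "adjoint_mat A = (\<chi> i j. cnj (A $ j $ i))"

definition psd :: "complex^'d^'d \<Rightarrow> bool" where
  "psd A \<longleftrightarrow> adjoint_mat A = A \<and>
     (\<forall>v. cinner_vec v (A *v v) \<in> \<real> \<and> 0 \<le> Re (cinner_vec v (A *v v)))"

definition povm :: "nat \<Rightarrow> (nat \<Rightarrow> complex^'d^'d) \<Rightarrow> bool" where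
  "povm n M \<longleftrightarrow> (\<forall>i<n. psd (M i)) \<and> (\<Sum>i<n. M i) = mat 1"

definition extreme_povm :: "nat \<Rightarrow> (nat \<Rightarrow> complex^'d^'d) \<Rightarrow> bool" where
  "extreme_povm n M \<longleftrightarrow> povm n M \<and>
     (\<forall>A B (t::real). povm n A \<and> povm n B \<and> 0 < t \<and> t < 1 \<and>
        (\<forall>i<n. M i = t *\<^sub>R A i + (1 - t) *\<^sub>R B i)
        \<longrightarrow> (\<forall>i<n. A i = M i \<and> B i = M i))"

definition proj :: "complex^'d \<Rightarrow> complex^'d^'d" where
  "proj \<psi> = (\<chi> a b. \<psi> $ a * cnj (\<psi> $ b))"

text \<open>Classical post-processing q (stochastic matrix q i j = q_{i|j}) from an n'-outcome
  POVM to an n-outcome POVM.\<close>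
definition post_processing :: "nat \<Rightarrow> nat \<Rightarrow> (nat \<Rightarrow> nat \<Rightarrow> real) \<Rightarrow> bool" where
  "post_processing n n' q \<longleftrightarrow>
     (\<forall>i<n. \<forall>j<n'. 0 \<le> q i j) \<and> (\<forall>j<n'. (\<Sum>i<n. q i j) = 1)"

definition apply_pp :: "nat \<Rightarrow> (nat \<Rightarrow> nat \<Rightarrow> real) \<Rightarrow> (nat \<Rightarrow> complex^'d^'d) \<Rightarrow> nat \<Rightarrow> complex^'d^'d" where
  "apply_pp n' q M' i = (\<Sum>j<n'. q i j *\<^sub>R M' j)"

end

theory Submission
  imports Defs
begin

text \<open>An extreme POVM admits no nontrivial real-linear relation among its nonzero effects
  (otherwise perturbing the effects along the relation in both directions exhibits it as a
  proper midpoint), so it has at most \<open>d\<^sup>2\<close> nonzero effects, the real dimension of the Hermitian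
  matrices. Each nonzero effect is \<open>|\<phi>\<rangle>\<langle>\<phi>|\<close>; splitting it into \<open>\<lceil>d \<parallel>\<phi>\<parallel>\<^sup>2\<rceil>\<close> equal copies gives
  rank-one effects of trace at most \<open>1/d\<close>, and since the traces add up to \<open>d\<close> there are at most
  \<open>d\<^sup>2 + d\<^sup>2\<close> copies. Merging the copies again is a deterministic post-processing.\<close>

lemma scaleR_complex_component: "(r *\<^sub>R w) $ a = of_real r * (w $ a :: complex)"
  by (simp only: vector_scaleR_component) (rule scaleR_conv_of_real)

lemma adjoint_mat_entry:
  "adjoint_mat H = H \<Longrightarrow> H $ b $ a = cnj (H $ a $ b)"
  unfolding adjoint_mat_def by (metis complex_cnj_cnj vec_lambda_beta)

lemma adjoint_mat_real_combination:
  fixes H :: "'i \<Rightarrow> complex^'d^'d"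
  assumes "\<forall>i\<in>S. adjoint_mat (H i) = H i"
  shows "adjoint_mat (\<Sum>i\<in>S. c i *\<^sub>R H i) = (\<Sum>i\<in>S. c i *\<^sub>R H i)"
proof -
  have "(\<Sum>i\<in>S. c i *\<^sub>R H i) $ b $ a = cnj ((\<Sum>i\<in>S. c i *\<^sub>R H i) $ a $ b)" for a b
  proof -
    have "(\<Sum>i\<in>S. c i *\<^sub>R H i) $ b $ a = (\<Sum>i\<in>S. c i *\<^sub>R (H i $ b $ a))"
      by (simp add: sum_component)
    also have "\<dots> = (\<Sum>i\<in>S. c i *\<^sub>R cnj (H i $ a $ b))"
      using assms adjoint_mat_entry by (intro sum.cong) auto
    also have "\<dots> = cnj ((\<Sum>i\<in>S. c i *\<^sub>R H i) $ a $ b)"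
      by (simp add: sum_component cnj_sum)
    finally show ?thesis .
  qed
  then show ?thesis by (simp add: adjoint_mat_def vec_eq_iff)
qed

lemma psd_diag_nonneg:
  assumes "psd M" shows "M $ a $ a \<in> \<real> \<and> 0 \<le> Re (M $ a $ a)"
proof -
  have "cinner_vec (axis a 1) (M *v axis a 1) = M $ a $ a"
    unfolding cinner_vec_def matrix_vector_mult_def axis_def
    by (simp add: if_distrib[of cnj] if_distrib[of "\<lambda>x. x * _"] if_distrib[of "\<lambda>x. _ * x"]
        cong: if_cong)
  then show ?thesis using assms unfolding psd_def by metis
qed

lemma psd_scaleR:
  assumes "psd A" "0 \<le> r" shows "psd (r *\<^sub>R A)"
proof -
  have "adjoint_mat (r *\<^sub>R A) = r *\<^sub>R adjoint_mat A"
    by (simp add: adjoint_mat_def vec_eq_iff scaleR_complex_component)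
  moreover have "cinner_vec v ((r *\<^sub>R A) *v v) = of_real r * cinner_vec v (A *v v)" for v
    by (simp add: cinner_vec_def matrix_vector_mult_def scaleR_complex_component
        scaleR_conv_of_real[where 'a=complex] sum_distrib_left mult_ac)
  ultimately show ?thesis using assms unfolding psd_def by (simp add: Reals_mult)
qed

lemma rank_one_outer_product:
  fixes M :: "'a::field^'n^'m"
  assumes "rank M = 1"
  shows "\<exists>c w. \<forall>a b. M $ a $ b = c a * w $ b"
proof -
  obtain B where B: "vec.independent B" "rows M \<subseteq> vec.span B" "card B = vec.dim (rows M)"
    by (rule vec.basis_exists)
  then obtain w where "B = {w}" using assms by (auto simp: row_rank_def_gen card_Suc_eq)
  then have "\<forall>a. \<exists>k. row a M = k *s w" using B(2) by (auto simp: vec.span_singleton rows_def)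
  then obtain c where "\<forall>a. row a M = c a *s w" by metis
  then have "\<forall>a b. M $ a $ b = c a * w $ b"
    by (metis row_def vec_lambda_beta vector_smult_component)
  then show ?thesis by blast
qed

text \<open>The vector is a column of \<open>M\<close> through a nonzero diagonal entry \<open>t\<close>, scaled by \<open>1/\<surd>t\<close>; the
  vanishing \<open>2\<times>2\<close> minors of a rank-one matrix give \<open>M$a$b = M$a$a0 * M$a0$b / t\<close>.\<close>
lemma psd_rank_one_eq_proj:
  fixes M :: "complex^'d^'d"
  assumes psd: "psd M" and nz: "M \<noteq> 0" and rank: "rank M = 1"
  shows "\<exists>\<phi>. M = proj \<phi>"
proof -
  obtain c w where cw: "\<And>a b. M $ a $ b = c a * w $ b" using rank_one_outer_product[OF rank] by blast
  have minor: "M $ a $ b * M $ e $ f = M $ a $ f * M $ e $ b" for a b e f by (simp add: cw)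
  have herm: "M $ b $ a = cnj (M $ a $ b)" for a b
    using psd adjoint_mat_entry unfolding psd_def by blast
  obtain a0 b0 where "M $ a0 $ b0 \<noteq> 0" using nz by (metis vec_eq_iff zero_index)
  moreover have "M $ a0 $ a0 * M $ b0 $ b0 = M $ a0 $ b0 * cnj (M $ a0 $ b0)"
    using minor[of a0 a0 b0 b0] herm[of a0 b0] by simp
  ultimately have diag_nz: "M $ a0 $ a0 \<noteq> 0" by auto
  define t where "t = Re (M $ a0 $ a0)"
  have diag: "M $ a0 $ a0 = of_real t" using psd_diag_nonneg[OF psd, of a0] unfolding t_def
    by (metis Reals_cases Re_complex_of_real)
  have "t > 0" using psd_diag_nonneg[OF psd, of a0] diag_nz diag unfolding t_def
    by (metis less_eq_real_def of_real_0)
  then have sqrt_t: "of_real (sqrt t) * of_real (sqrt t) = M $ a0 $ a0"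
    by (metis diag abs_of_pos of_real_mult real_sqrt_mult_self)
  define \<phi> where "\<phi> = (\<chi> a. M $ a $ a0 / of_real (sqrt t))"
  have "M $ a $ b = \<phi> $ a * cnj (\<phi> $ b)" for a b
  proof -
    have "\<phi> $ a * cnj (\<phi> $ b) = M $ a $ a0 * M $ a0 $ b / M $ a0 $ a0"
      unfolding \<phi>_def sqrt_t[symmetric] using herm[of b a0] by simp
    also have "\<dots> = M $ a $ b" using minor[of a a0 a0 b] diag_nz by (simp add: field_simps)
    finally show ?thesis by simp
  qed
  then show ?thesis by (auto simp: vec_eq_iff proj_def)
qed

lemma trace_sum: "trace (\<Sum>i\<in>S. A i) = (\<Sum>i\<in>S. trace (A i :: 'a::comm_semiring_1^'n^'n))"
  unfolding trace_def by (simp add: sum_component sum.swap[of _ S])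

lemma trace_proj: "trace (proj \<phi>) = of_real ((norm \<phi>)\<^sup>2)"
proof -
  have "trace (proj \<phi>) = (\<Sum>a\<in>UNIV. of_real ((norm (\<phi> $ a))\<^sup>2))"
    unfolding trace_def proj_def complex_norm_square by simp
  also have "\<dots> = of_real (\<Sum>a\<in>UNIV. (norm (\<phi> $ a))\<^sup>2)"
    by (rule of_real_sum[symmetric])
  also have "\<dots> = of_real ((norm \<phi>)\<^sup>2)"
    by (simp add: norm_vec_def L2_set_def sum_nonneg)
  finally show ?thesis .
qed

lemma proj_scaleR: "proj (c *\<^sub>R \<phi>) = (c * c) *\<^sub>R proj \<phi>"
  by (simp add: vec_eq_iff proj_def scaleR_complex_component algebra_simps)

lemma proj_eq_0_iff: "proj \<phi> = 0 \<longleftrightarrow> \<phi> = 0"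
  by (auto simp: proj_def vec_eq_iff)

text \<open>Normalising \<open>\<phi>\<close> moves \<open>\<parallel>\<phi>\<parallel>\<^sup>2\<close> into the weight, which is then at most \<open>1/d\<close>.\<close>
lemma scaleR_proj_as_unit_proj:
  fixes \<phi> :: "complex^'d"
  assumes "\<phi> \<noteq> 0" and k: "real CARD('d) * (norm \<phi>)\<^sup>2 \<le> real k"
  shows "\<exists>\<alpha> \<psi>. norm \<psi> = 1 \<and> 0 \<le> \<alpha> \<and> \<alpha> \<le> 1 / real CARD('d) \<and>
           (1 / real k) *\<^sub>R proj \<phi> = \<alpha> *\<^sub>R proj \<psi>"
proof (intro exI conjI)
  have "0 < real CARD('d) * (norm \<phi>)\<^sup>2" using assms(1) by simp
  with k have "0 < real k" by linarith
  then show "(norm \<phi>)\<^sup>2 / real k \<le> 1 / real CARD('d)" using k by (simp add: field_simps)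
  show "(1 / real k) *\<^sub>R proj \<phi> = ((norm \<phi>)\<^sup>2 / real k) *\<^sub>R proj ((1 / norm \<phi>) *\<^sub>R \<phi>)"
    using assms(1) by (simp add: proj_scaleR power2_eq_square)
qed (use assms(1) in auto)

lemma povm_trace_sum:
  assumes "povm n (M :: nat \<Rightarrow> complex^'d^'d)"
  shows "(\<Sum>l<n. Re (trace (M l))) = real CARD('d)"
  using assms by (simp add: povm_def Re_sum[symmetric] trace_sum[symmetric] trace_I)

subsection \<open>Extreme POVMs have at most \<open>d\<^sup>2\<close> nonzero effects\<close>

lemma extreme_povm_relation_trivial:
  fixes M :: "nat \<Rightarrow> complex^'d^'d"
  assumes ext: "extreme_povm n M" and rel: "(\<Sum>i<n. c i *\<^sub>R M i) = 0" and "k < n"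
  shows "c k = 0 \<or> M k = 0"
proof -
  have psd: "\<And>i. i < n \<Longrightarrow> psd (M i)" and sum: "(\<Sum>i<n. M i) = mat 1"
    using ext by (auto simp: extreme_povm_def povm_def)
  define e where "e = 1 / (1 + (\<Sum>i<n. \<bar>c i\<bar>))"
  have sum_abs: "0 \<le> (\<Sum>i<n. \<bar>c i\<bar>)" by (simp add: sum_nonneg)
  then have e_pos: "e > 0" unfolding e_def by (intro divide_pos_pos) linarith+
  have small: "\<bar>e * c i\<bar> < 1" if "i < n" for i
  proof -
    have "\<bar>c i\<bar> \<le> (\<Sum>i<n. \<bar>c i\<bar>)" using that by (intro member_le_sum) auto
    then show ?thesis using sum_abs by (simp add: e_def abs_mult field_simps)
  qed
  have coeff: "0 \<le> 1 + s * (e * c i)" if "i < n" "\<bar>s\<bar> = 1" for s i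
    using small[OF that(1)] that(2) by (auto simp: abs_less_iff abs_if split: if_splits)
  define P where "P s i = (1 + s * (e * c i)) *\<^sub>R M i" for s i
  have povm: "povm n (P s)" if "\<bar>s\<bar> = 1" for s
    unfolding povm_def
  proof (intro conjI allI impI)
    show "psd (P s i)" if "i < n" for i
      unfolding P_def using psd_scaleR psd coeff \<open>\<bar>s\<bar> = 1\<close> that by blast
    have "(\<Sum>i<n. P s i) = (\<Sum>i<n. M i) + (s * e) *\<^sub>R (\<Sum>i<n. c i *\<^sub>R M i)"
      by (simp add: P_def scaleR_add_left sum.distrib scaleR_sum_right mult.assoc)
    then show "(\<Sum>i<n. P s i) = mat 1" using sum rel by simp
  qed
  have mid: "\<forall>i<n. M i = (1/2 :: real) *\<^sub>R P 1 i + (1 - 1/2) *\<^sub>R P (-1) i"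
  proof (intro allI impI)
    fix i
    have "(1/2) * (1 + 1 * (e * c i)) + (1 - 1/2) * (1 + -1 * (e * c i)) = (1::real)"
      by (simp add: field_simps)
    then show "M i = (1/2 :: real) *\<^sub>R P 1 i + (1 - 1/2) *\<^sub>R P (-1) i"
      by (simp only: P_def scaleR_scaleR scaleR_add_left[symmetric] scaleR_one)
  qed
  have "povm n (P 1)" "povm n (P (-1))" using povm by simp_all
  then have "P 1 k = M k"
    using ext[unfolded extreme_povm_def, THEN conjunct2, rule_format, of "P 1" "P (-1)" "1/2"]
      mid \<open>k < n\<close> by simp
  then have "(e * c k) *\<^sub>R M k = 0" by (simp add: P_def scaleR_add_left)
  then show ?thesis using e_pos by simp
qed

lemma exists_nontrivial_zero_combination:
  fixes g :: "'i \<Rightarrow> 'b::euclidean_space"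
  assumes "finite S" "card S > DIM('b)"
  shows "\<exists>c. (\<exists>i\<in>S. c i \<noteq> 0) \<and> (\<Sum>i\<in>S. c i *\<^sub>R g i) = 0"
proof (cases "inj_on g S")
  case False
  then obtain i j where ij: "i \<in> S" "j \<in> S" "i \<noteq> j" "g i = g j"
    unfolding inj_on_def by blast
  define c where "c k = (if k = i then 1 else if k = j then -1 else (0::real))" for k
  have "c k *\<^sub>R g k = (if k = i then g i else 0) - (if k = j then g j else 0)" for k
    using ij(3,4) by (simp add: c_def)
  then have "(\<Sum>k\<in>S. c k *\<^sub>R g k) = 0" using ij assms(1) by (simp add: sum_subtractf)
  then show ?thesis using ij by (auto simp: c_def intro!: exI[of _ c])
next
  case True
  then have "card (g ` S) > DIM('b)" using assms(2) by (simp add: card_image)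
  then have "dependent (g ` S)" using independent_bound[of "g ` S"] not_le by blast
  then obtain u where u: "\<exists>v\<in>g ` S. u v \<noteq> 0" "(\<Sum>v\<in>g ` S. u v *\<^sub>R v) = 0"
    using dependent_finite[of "g ` S"] assms(1) by auto
  then have "(\<Sum>i\<in>S. u (g i) *\<^sub>R g i) = 0" using True by (simp add: sum.reindex)
  then show ?thesis using u(1) by auto
qed

text \<open>\<open>Re z + Im z\<close> of the entries is injective on Hermitian matrices, since the entries below the
  diagonal contribute \<open>Re z - Im z\<close>; it is a real-linear embedding into \<open>\<real>\<^bsup>d\<times>d\<^esup>\<close>.\<close>
definition hermitian_coords :: "complex^'d^'d \<Rightarrow> real^('d \<times> 'd)" where
  "hermitian_coords H = (\<chi> p. Re (H $ fst p $ snd p) + Im (H $ fst p $ snd p))"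

lemma hermitian_coords_real_combination:
  "hermitian_coords (\<Sum>i\<in>S. c i *\<^sub>R H i) = (\<Sum>i\<in>S. c i *\<^sub>R hermitian_coords (H i))"
  unfolding hermitian_coords_def vec_eq_iff
  by (simp add: sum_component Re_sum Im_sum sum.distrib[symmetric] distrib_left)

lemma hermitian_coords_eq_0_iff:
  assumes "adjoint_mat H = H"
  shows "hermitian_coords H = 0 \<longleftrightarrow> H = 0"
proof
  assume zero: "hermitian_coords H = 0"
  have "H $ a $ b = 0" for a b
  proof -
    have "Re (H $ a $ b) + Im (H $ a $ b) = 0" "Re (H $ b $ a) + Im (H $ b $ a) = 0"
      using zero by (auto simp: hermitian_coords_def vec_eq_iff)
    then show ?thesis using adjoint_mat_entry[OF assms, of b a] by (simp add: complex_eq_iff)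
  qed
  then show "H = 0" by (simp add: vec_eq_iff)
qed (simp add: hermitian_coords_def vec_eq_iff)

lemma card_le_if_hermitian_independent:
  fixes H :: "'i \<Rightarrow> complex^'d^'d"
  assumes "finite S" and herm: "\<forall>i\<in>S. adjoint_mat (H i) = H i"
    and indep: "\<And>c. (\<Sum>i\<in>S. c i *\<^sub>R H i) = 0 \<Longrightarrow> \<forall>i\<in>S. c i = 0"
  shows "card S \<le> CARD('d)\<^sup>2"
proof (rule ccontr)
  assume "\<not> ?thesis"
  then have "card S > DIM(real^('d \<times> 'd))" by (simp add: power2_eq_square)
  then obtain c where c: "\<exists>i\<in>S. c i \<noteq> 0" "(\<Sum>i\<in>S. c i *\<^sub>R hermitian_coords (H i)) = 0"
    using exists_nontrivial_zero_combination[OF \<open>finite S\<close>, of "\<lambda>i. hermitian_coords (H i)"]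
    by blast
  then have "hermitian_coords (\<Sum>i\<in>S. c i *\<^sub>R H i) = 0"
    by (simp add: hermitian_coords_real_combination)
  then have "(\<Sum>i\<in>S. c i *\<^sub>R H i) = 0"
    using hermitian_coords_eq_0_iff[OF adjoint_mat_real_combination[OF herm]] by blast
  then show False using indep c(1) by blast
qed

lemma extreme_povm_card_nonzero_effects:
  fixes M :: "nat \<Rightarrow> complex^'d^'d"
  assumes ext: "extreme_povm n M"
  shows "card {i. i < n \<and> M i \<noteq> 0} \<le> CARD('d)\<^sup>2"
proof (rule card_le_if_hermitian_independent)
  show "\<forall>i\<in>{i. i < n \<and> M i \<noteq> 0}. adjoint_mat (M i) = M i"
    using ext by (simp add: extreme_povm_def povm_def psd_def)
  fix c assume rel: "(\<Sum>i\<in>{i. i < n \<and> M i \<noteq> 0}. c i *\<^sub>R M i) = 0"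
  have "(\<Sum>i<n. c i *\<^sub>R M i) = (\<Sum>i\<in>{i. i < n \<and> M i \<noteq> 0}. c i *\<^sub>R M i)"
    by (rule sum.mono_neutral_right) auto
  then show "\<forall>i\<in>{i. i < n \<and> M i \<noteq> 0}. c i = 0"
    using extreme_povm_relation_trivial[OF ext] rel by auto
qed simp

subsection \<open>Splitting effects into equal copies\<close>

definition copies :: "(nat \<Rightarrow> nat) \<Rightarrow> nat \<Rightarrow> nat list" where
  "copies m n = concat (map (\<lambda>l. replicate (m l) l) [0..<n])"

lemma length_copies: "length (copies m n) = (\<Sum>l<n. m l)"
  by (induct n) (simp_all add: copies_def)

lemma set_copies: "set (copies m n) = {l. l < n \<and> 0 < m l}"
  by (auto simp: copies_def)

lemma sum_over_copies:
  "(\<Sum>j<length (copies m n). h (copies m n ! j)) = (\<Sum>l<n. real (m l) *\<^sub>R (h l :: 'a::real_vector))"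
proof -
  have "sum_list (replicate k x) = real k *\<^sub>R x" for k and x :: 'a
    by (induct k) (simp_all add: scaleR_add_left)
  then have "sum_list (map h (copies m n)) = (\<Sum>l<n. real (m l) *\<^sub>R h l)"
    by (induct n) (simp_all add: copies_def)
  then show ?thesis by (simp add: sum_list_sum_nth lessThan_atLeast0)
qed

lemma povm_split_into_copies:
  fixes M :: "nat \<Rightarrow> complex^'d^'d"
  assumes povm: "povm n M" and m_pos: "\<And>l. l < n \<Longrightarrow> 0 < m l \<longleftrightarrow> M l \<noteq> 0"
  shows "\<exists>M' q. povm (\<Sum>l<n. m l) M' \<and> post_processing n (\<Sum>l<n. m l) q \<and>
           (\<forall>i<n. M i = apply_pp (\<Sum>l<n. m l) q M' i) \<and>
           (\<forall>j<(\<Sum>l<n. m l). \<exists>l<n. M l \<noteq> 0 \<and> M' j = (1 / real (m l)) *\<^sub>R M l)"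
proof (intro exI conjI)
  define L where "L = copies m n"
  define M' where "M' j = (1 / real (m (L ! j))) *\<^sub>R M (L ! j)" for j
  define q where "q i j = (if L ! j = i then 1 else (0::real))" for i j
  have n': "length L = (\<Sum>l<n. m l)" by (simp add: L_def length_copies)
  have L_nth: "L ! j < n" "0 < m (L ! j)" "M (L ! j) \<noteq> 0" if "j < length L" for j
    using nth_mem[OF that] m_pos by (auto simp: L_def set_copies)
  have split: "(\<Sum>j<length L. h (L ! j)) = (\<Sum>l<n. real (m l) *\<^sub>R h l)" for h :: "nat \<Rightarrow> complex^'d^'d"
    unfolding L_def by (rule sum_over_copies)
  have copies_add_up: "real (m l) *\<^sub>R ((1 / real (m l)) *\<^sub>R M l) = M l" if "l < n" for l
    using m_pos[OF that] by (cases "M l = 0") auto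
  show "povm (\<Sum>l<n. m l) M'"
    unfolding povm_def n'[symmetric]
  proof (intro conjI allI impI)
    show "psd (M' j)" if "j < length L" for j
      unfolding M'_def using povm L_nth[OF that] by (intro psd_scaleR) (auto simp: povm_def)
    have "(\<Sum>j<length L. M' j) = (\<Sum>l<n. real (m l) *\<^sub>R ((1 / real (m l)) *\<^sub>R M l))"
      unfolding M'_def by (rule split)
    also have "\<dots> = (\<Sum>l<n. M l)" by (rule sum.cong[OF refl], rule copies_add_up) simp
    finally show "(\<Sum>j<length L. M' j) = mat 1" using povm by (simp add: povm_def)
  qed
  show "post_processing n (\<Sum>l<n. m l) q"
    using L_nth by (auto simp: post_processing_def q_def n'[symmetric])
  show "\<forall>i<n. M i = apply_pp (\<Sum>l<n. m l) q M' i"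
  proof (intro allI impI)
    fix i assume "i < n"
    have "apply_pp (\<Sum>l<n. m l) q M' i
        = (\<Sum>j<length L. (if L ! j = i then (1 / real (m (L ! j))) *\<^sub>R M (L ! j) else 0))"
      unfolding apply_pp_def q_def M'_def n'[symmetric] by (rule sum.cong) auto
    also have "\<dots> = (\<Sum>l<n. real (m l) *\<^sub>R (if l = i then (1 / real (m l)) *\<^sub>R M l else 0))"
      by (rule split)
    also have "\<dots> = M i" using copies_add_up \<open>i < n\<close> by (simp add: if_distrib cong: if_cong)
    finally show "M i = apply_pp (\<Sum>l<n. m l) q M' i" by simp
  qed
  show "\<forall>j<(\<Sum>l<n. m l). \<exists>l<n. M l \<noteq> 0 \<and> M' j = (1 / real (m l)) *\<^sub>R M l"
  proof (intro allI impI)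
    fix j assume "j < (\<Sum>l<n. m l)"
    then have "j < length L" by (simp add: n')
    then show "\<exists>l<n. M l \<noteq> 0 \<and> M' j = (1 / real (m l)) *\<^sub>R M l"
      using L_nth by (intro exI[of _ "L ! j"]) (simp add: M'_def)
  qed
qed

lemma sum_nat_ceiling_le:
  assumes "finite S" "\<And>l. l \<in> S \<Longrightarrow> 0 \<le> x l"
  shows "real (\<Sum>l\<in>S. nat \<lceil>x l\<rceil>) \<le> (\<Sum>l\<in>S. x l) + real (card {l\<in>S. x l \<noteq> 0})"
proof -
  have "real (nat \<lceil>x l\<rceil>) \<le> x l + (if x l \<noteq> 0 then 1 else 0)" if "l \<in> S" for l
    using assms(2)[OF that] by (auto simp: of_nat_int_ceiling)
  then have "real (\<Sum>l\<in>S. nat \<lceil>x l\<rceil>) \<le> (\<Sum>l\<in>S. x l + (if x l \<noteq> 0 then 1 else 0))"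
    unfolding of_nat_sum by (rule sum_mono)
  also have "\<dots> = (\<Sum>l\<in>S. x l) + real (card {l\<in>S. x l \<noteq> 0})"
    using assms(1) by (simp add: sum.distrib sum.If_cases Int_def)
  finally show ?thesis .
qed

subsection \<open>Rank-one POVMs\<close>

lemma rank_one_povm_obtain_vectors:
  fixes M :: "nat \<Rightarrow> complex^'d^'d"
  assumes "povm n M" "\<forall>i<n. M i \<noteq> 0 \<longrightarrow> rank (M i) = 1"
  obtains \<phi> where "\<And>l. l < n \<Longrightarrow> M l = proj (\<phi> l)"
proof -
  have "\<exists>\<phi>. l < n \<longrightarrow> M l = proj \<phi>" for l
  proof (cases "l < n \<and> M l \<noteq> 0")
    case True
    then show ?thesis using assms psd_rank_one_eq_proj by (auto simp: povm_def)
  next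
    case False
    then show ?thesis by (metis proj_eq_0_iff)
  qed
  then have "\<forall>l. \<exists>\<phi>. l < n \<longrightarrow> M l = proj \<phi>" by blast
  then obtain \<phi> where "\<forall>l. l < n \<longrightarrow> M l = proj (\<phi> l)" by (rule choice[THEN exE])
  then show ?thesis using that by blast
qed

lemma rank_one_povm_copies_le:
  fixes M :: "nat \<Rightarrow> complex^'d^'d"
  assumes povm: "povm n M" and \<phi>: "\<And>l. l < n \<Longrightarrow> M l = proj (\<phi> l)"
  shows "(\<Sum>l<n. nat \<lceil>real CARD('d) * (norm (\<phi> l))\<^sup>2\<rceil>) \<le> CARD('d)\<^sup>2 + card {l. l < n \<and> M l \<noteq> 0}"
proof -
  let ?x = "\<lambda>l. real CARD('d) * (norm (\<phi> l))\<^sup>2"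
  have "(\<Sum>l<n. (norm (\<phi> l))\<^sup>2) = real CARD('d)"
    using povm_trace_sum[OF povm] \<phi> by (simp add: trace_proj)
  then have "(\<Sum>l<n. ?x l) = real (CARD('d)\<^sup>2)" by (simp add: sum_distrib_left[symmetric] power2_eq_square)
  moreover have "{l\<in>{..<n}. ?x l \<noteq> 0} = {l. l < n \<and> M l \<noteq> 0}"
    using \<phi> by (auto simp: proj_eq_0_iff)
  ultimately have "real (\<Sum>l<n. nat \<lceil>?x l\<rceil>) \<le> real (CARD('d)\<^sup>2 + card {l. l < n \<and> M l \<noteq> 0})"
    using sum_nat_ceiling_le[of "{..<n}" ?x] by simp
  then show ?thesis by (simp only: of_nat_le_iff)
qed

lemma rank_one_povm_refinement:
  fixes M :: "nat \<Rightarrow> complex^'d^'d"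
  assumes povm: "povm n M" and \<phi>: "\<And>l. l < n \<Longrightarrow> M l = proj (\<phi> l)"
  defines "n' \<equiv> \<Sum>l<n. nat \<lceil>real CARD('d) * (norm (\<phi> l))\<^sup>2\<rceil>"
  shows "\<exists>M' q. povm n' M' \<and> post_processing n n' q \<and> (\<forall>i<n. M i = apply_pp n' q M' i) \<and>
           (\<forall>j<n'. \<exists>\<alpha> \<psi>. norm \<psi> = 1 \<and> 0 \<le> \<alpha> \<and> \<alpha> \<le> 1 / real CARD('d) \<and>
                        M' j = \<alpha> *\<^sub>R proj \<psi>)"
proof -
  define m where "m l = nat \<lceil>real CARD('d) * (norm (\<phi> l))\<^sup>2\<rceil>" for l
  have m_pos: "0 < m l \<longleftrightarrow> M l \<noteq> 0" if "l < n" for l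
    using \<phi>[OF that] by (simp add: m_def proj_eq_0_iff zero_less_mult_iff)
  obtain M' q where M': "povm n' M'" "post_processing n n' q" "\<forall>i<n. M i = apply_pp n' q M' i"
      and copy: "\<forall>j<n'. \<exists>l<n. M l \<noteq> 0 \<and> M' j = (1 / real (m l)) *\<^sub>R M l"
    using povm_split_into_copies[where m = m, OF povm m_pos] unfolding n'_def m_def by blast
  have "\<exists>\<alpha> \<psi>. norm \<psi> = 1 \<and> 0 \<le> \<alpha> \<and> \<alpha> \<le> 1 / real CARD('d) \<and> M' j = \<alpha> *\<^sub>R proj \<psi>"
    if "j < n'" for j
  proof -
    from copy that obtain l where l: "l < n" "M l \<noteq> 0" "M' j = (1 / real (m l)) *\<^sub>R M l"
      by blast
    then show ?thesis
      using scaleR_proj_as_unit_proj[of "\<phi> l" "m l"] \<phi>[OF l(1)] real_nat_ceiling_ge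
      by (simp add: m_def proj_eq_0_iff)
  qed
  with M' show ?thesis by (intro exI[of _ M'] exI[of _ q] conjI) blast+
qed

theorem lemma8:
  fixes n :: nat and M :: "nat \<Rightarrow> complex^'d^'d"
  assumes "povm n M"
    and "\<forall>i<n. M i \<noteq> 0 \<longrightarrow> rank (M i) = 1"
    and "extreme_povm n M"
  shows "\<exists>n' M' q. povm n' M' \<and> post_processing n n' q \<and>
           (\<forall>i<n. M i = apply_pp n' q M' i) \<and>
           n' \<le> 2 * CARD('d)^2 \<and>
           (\<forall>j<n'. \<exists>\<alpha> \<psi>. norm \<psi> = 1 \<and> 0 \<le> \<alpha> \<and> \<alpha> \<le> 1 / real CARD('d) \<and>
                        M' j = \<alpha> *\<^sub>R proj \<psi>)"
proof -
  obtain \<phi> where \<phi>: "\<And>l. l < n \<Longrightarrow> M l = proj (\<phi> l)"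
    using rank_one_povm_obtain_vectors[OF assms(1,2)] by blast
  define n' where "n' = (\<Sum>l<n. nat \<lceil>real CARD('d) * (norm (\<phi> l))\<^sup>2\<rceil>)"
  have "n' \<le> CARD('d)\<^sup>2 + card {l. l < n \<and> M l \<noteq> 0}"
    unfolding n'_def using rank_one_povm_copies_le[OF assms(1) \<phi>] .
  also have "\<dots> \<le> 2 * CARD('d)\<^sup>2"
    using extreme_povm_card_nonzero_effects[OF assms(3)] by simp
  finally have "n' \<le> 2 * CARD('d)\<^sup>2" .
  moreover obtain M' q where "povm n' M'" "post_processing n n' q" "\<forall>i<n. M i = apply_pp n' q M' i"
      "\<forall>j<n'. \<exists>\<alpha> \<psi>. norm \<psi> = 1 \<and> 0 \<le> \<alpha> \<and> \<alpha> \<le> 1 / real CARD('d) \<and> M' j = \<alpha> *\<^sub>R proj \<psi>"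
    using rank_one_povm_refinement[OF assms(1) \<phi>] unfolding n'_def[symmetric] by blast
  ultimately show ?thesis by (intro exI[of _ n'] exI[of _ M'] exI[of _ q] conjI) blast+
qed

end
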